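(* Let $V$ be a vertex algebra and $M$ a subspace of $V$ containing $C_2(V)$ such that $M/C_2(V)$ is an ideal of the commutative associative algebra $V/C_2(V)$. Then $M$ is an $MZ_{0,-1}$-subspace of $V$.
   Context: A vertex algebra $(V,Y,\mathbf{1})$ is over $\mathbb{C}$; for $u\in V$ write $Y(u,z)=\sum_{n\in\mathbb{Z}}u_nz^{-n-1}$ with $u_n\in\operatorname{End}V$. Iterated products are nested to the right: $v_{n_1}\cdots v_{n_t}v=v_{n_1}(\cdots(v_{n_t}v))$. $C_2(V)=\operatorname{span}_{\mathbb{C}}\{u_{-2}v: u,v\in V\}$; $V/C_2(V)$ is a commutative associative unital algebra with product $(a+C_2(V))(b+C_2(V))=a_{-1}b+C_2(V)$. For a subspace $M\subseteq V$: $r_{0,-1}(M)$ is the set of $v\in V$ for which there is $m\ge 0$ with $v_{n_1}\cdots v_{n_t}v\in M$ for all $t\ge m$ and all $n_1,\dots,n_t\in\{0,-1\}$. $lsr_{0,-1}(M)$ is the set of $v\in V$ such that for every $b\in V$ there is $m\ge0$ with $b_sv_{n_1}\cdots v_{n_t}v\in M$ for all $t\ge m$ and all $s,n_1,\dots,n_t\in\{0,-1\}$. $rsr_{0,-1}(M)$ is the set of $v\in V$ such that for every $w\in V$ there is $m\ge 0$ with $(v_{n_1}\cdots v_{n_t}v)_nw\in M$ for all $t\ge m$ and all $n,n_1,\dots,n_t\in\{0,-1\}$. $sr_{0,-1}(M)=lsr_{0,-1}(M)\cap rsr_{0,-1}(M)$. $M$ is an $MZ_{0,-1}$-subspace of $V$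 if $r_{0,-1}(M)=sr_{0,-1}(M)$. *)

theory Defs
  imports Complex_Main
begin

text \<open>Y u n v stands for the mode u_n applied to v (u_n v).\<close>

definition fsum :: "(nat \<Rightarrow> 'v::ab_group_add) \<Rightarrow> 'v" where
  "fsum f = (\<Sum>i\<in>{i. f i \<noteq> 0}. f i)"

definition vertex_algebra ::
  "(complex \<Rightarrow> 'v::ab_group_add \<Rightarrow> 'v) \<Rightarrow> ('v \<Rightarrow> int \<Rightarrow> 'v \<Rightarrow> 'v) \<Rightarrow> 'v \<Rightarrow> bool" where
  "vertex_algebra sc Y vac \<longleftrightarrow>
     vector_space sc \<and>
     (\<forall>u n. Vector_Spaces.linear sc sc (Y u n)) \<and>
     (\<forall>v n. Vector_Spaces.linear sc sc (\<lambda>u. Y u n v)) \<and>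
     (\<forall>u v. \<exists>N. \<forall>n\<ge>N. Y u n v = 0) \<and>
     (\<forall>n v. Y vac n v = (if n = -1 then v else 0)) \<and>
     (\<forall>u. Y u (-1) vac = u) \<and>
     (\<forall>u n. n \<ge> 0 \<longrightarrow> Y u n vac = 0) \<and>
     (\<forall>u v w m n l.
        fsum (\<lambda>i. sc ((of_int m) gchoose i) (Y (Y u (l + int i) v) (m + n - int i) w))
        = fsum (\<lambda>i. sc ((-1) ^ i * ((of_int l) gchoose i))
              (Y u (m + l - int i) (Y v (n + int i) w)
               - sc ((-1) powi l) (Y v (n + l - int i) (Y u (m + int i) w)))))"

definition C2 :: "(complex \<Rightarrow> 'v::ab_group_add \<Rightarrow> 'v) \<Rightarrow> ('v \<Rightarrow> int \<Rightarrow> 'v \<Rightarrow> 'v) \<Rightarrow> 'v set" where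
  "C2 sc Y = module.span sc {Y u (-2) v | u v. True}"

text \<open>For a subspace M containing C_2(V), M/C_2(V) is an ideal of the commutative
  associative algebra V/C_2(V) (product induced by a_{-1}b) iff M is closed under
  left multiplication a_{-1}(-) by arbitrary a in V.\<close>
definition quotient_ideal ::
  "(complex \<Rightarrow> 'v::ab_group_add \<Rightarrow> 'v) \<Rightarrow> ('v \<Rightarrow> int \<Rightarrow> 'v \<Rightarrow> 'v) \<Rightarrow> 'v set \<Rightarrow> bool" where
  "quotient_ideal sc Y M \<longleftrightarrow> (\<forall>a m. m \<in> M \<longrightarrow> Y a (-1) m \<in> M)"

text \<open>iter Y v [n1,...,nt] = v_{n1}(v_{n2}(...(v_{nt} v)))\<close>
definition iter :: "('v \<Rightarrow> int \<Rightarrow> 'v \<Rightarrow> 'v) \<Rightarrow> 'v \<Rightarrow> int list \<Rightarrow> 'v" where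
  "iter Y v ns = foldr (\<lambda>n x. Y v n x) ns v"

definition r01 :: "('v \<Rightarrow> int \<Rightarrow> 'v \<Rightarrow> 'v) \<Rightarrow> 'v set \<Rightarrow> 'v set" where
  "r01 Y M = {v. \<exists>m::nat. \<forall>ns. length ns \<ge> m \<and> set ns \<subseteq> {0, -1} \<longrightarrow> iter Y v ns \<in> M}"

definition lsr01 :: "('v \<Rightarrow> int \<Rightarrow> 'v \<Rightarrow> 'v) \<Rightarrow> 'v set \<Rightarrow> 'v set" where
  "lsr01 Y M = {v. \<forall>b. \<exists>m::nat. \<forall>s ns. s \<in> {0, -1} \<and> length ns \<ge> m \<and> set ns \<subseteq> {0, -1}
                     \<longrightarrow> Y b s (iter Y v ns) \<in> M}"

definition rsr01 :: "('v \<Rightarrow> int \<Rightarrow> 'v \<Rightarrow> 'v) \<Rightarrow> 'v set \<Rightarrow> 'v set" where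
  "rsr01 Y M = {v. \<forall>w. \<exists>m::nat. \<forall>n ns. n \<in> {0, -1} \<and> length ns \<ge> m \<and> set ns \<subseteq> {0, -1}
                     \<longrightarrow> Y (iter Y v ns) n w \<in> M}"

definition sr01 :: "('v \<Rightarrow> int \<Rightarrow> 'v \<Rightarrow> 'v) \<Rightarrow> 'v set \<Rightarrow> 'v set" where
  "sr01 Y M = lsr01 Y M \<inter> rsr01 Y M"

definition MZ01_subspace :: "('v \<Rightarrow> int \<Rightarrow> 'v \<Rightarrow> 'v) \<Rightarrow> 'v set \<Rightarrow> bool" where
  "MZ01_subspace Y M \<longleftrightarrow> r01 Y M = sr01 Y M"

end

theory Submission
  imports Defs
begin

text \<open>Modulo \<open>C\<^sub>2(V)\<close> the modes \<open>u\<^sub>-\<^sub>1\<close> and \<open>u\<^sub>0\<close> act as the product and the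
  Poisson bracket of \<open>V/C\<^sub>2(V)\<close>: all modes \<open>u\<^sub>n\<close> with \<open>n \<le> -2\<close> land in \<open>C\<^sub>2(V)\<close>, the product
  is commutative, the bracket is skew-symmetric and \<open>b\<^sub>0\<close> is a derivation. Consequently an
  iterate \<open>v\<^sub>n\<^sub>1 \<cdots> v\<^sub>n\<^sub>t v\<close> with all \<open>n\<^sub>i \<in> {0,-1}\<close> either lies in \<open>C\<^sub>2(V)\<close> or is the power
  \<open>v\<^sup>t\<^sup>+\<^sup>1 = v\<^sub>-\<^sub>1\<^sup>t v\<close>, and \<open>b\<^sub>0 v\<^sup>t\<^sup>+\<^sup>2 \<equiv> (t+2) (b\<^sub>0 v) v\<^sup>t\<^sup>+\<^sup>1\<close>. If the long powers of \<open>v\<close> lie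
  in \<open>M\<close>, the ideal property therefore puts \<open>b\<^sub>s\<close> and \<open>(\<cdot>)\<^sub>n w\<close> of all long iterates into \<open>M\<close>,
  so \<open>r\<^sub>0\<^sub>,\<^sub>-\<^sub>1(M) \<subseteq> sr\<^sub>0\<^sub>,\<^sub>-\<^sub>1(M)\<close>; the other inclusion is seen by taking \<open>b\<close> to be the vacuum.\<close>

lemma fsum_eq_sum:
  assumes "finite S" and "\<And>i. i \<notin> S \<Longrightarrow> f i = 0"
  shows "fsum f = sum f S"
  unfolding fsum_def using assms by (intro sum.mono_neutral_right[symmetric]) auto

lemma fsum_singleton: "(\<And>i. i \<noteq> k \<Longrightarrow> f i = 0) \<Longrightarrow> fsum f = f k"
  using fsum_eq_sum[of "{k}" f] by auto

lemma gbinomial_minus_two: "((-2::'a::field_char_0) gchoose j) = (-1) ^ j * of_nat (j + 1)"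
proof -
  have "((-2::'a) gchoose j) = (-1) ^ j * ((of_nat j + 1) gchoose j)"
    by (simp add: gbinomial_negated_upper[of "-2"] add.commute)
  also have "(of_nat j + 1 :: 'a) gchoose j = of_nat (j + 1)"
    using binomial_gbinomial[of "Suc j" j, where 'a='a] by (simp add: add.commute)
  finally show ?thesis .
qed

lemma iter_Nil [simp]: "iter Y v [] = v"
  by (simp add: iter_def)

lemma iter_Cons [simp]: "iter Y v (n # ns) = Y v n (iter Y v ns)"
  by (simp add: iter_def)

locale vertex_alg =
  fixes sc :: "complex \<Rightarrow> 'v::ab_group_add \<Rightarrow> 'v"
    and Y :: "'v \<Rightarrow> int \<Rightarrow> 'v \<Rightarrow> 'v"
    and vac :: 'v
  assumes vertex_algebra: "vertex_algebra sc Y vac"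
begin

sublocale vector_space sc
  using vertex_algebra unfolding vertex_algebra_def by auto

lemma mode_hom: "module_hom sc sc (Y u n)"
  using vertex_algebra unfolding vertex_algebra_def by (simp add: module_hom_iff_linear)

lemma mode_hom_left: "module_hom sc sc (\<lambda>u. Y u n w)"
  using vertex_algebra unfolding vertex_algebra_def by (simp add: module_hom_iff_linear)

lemma mode_zero [simp]: "Y u n 0 = 0"
  using module_hom.zero[OF mode_hom] .

lemma mode_zero_left [simp]: "Y 0 n w = 0"
  using module_hom.zero[OF mode_hom_left] by simp

lemma mode_diff: "Y u n (x - y) = Y u n x - Y u n y"
  using module_hom.diff[OF mode_hom] .

lemma mode_scale: "Y u n (sc c x) = sc c (Y u n x)"
  using module_hom.scale[OF mode_hom] .

lemma truncation: "\<exists>N. \<forall>n\<ge>N. Y u n v = 0"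
  using vertex_algebra unfolding vertex_algebra_def by auto

lemma vacuum_mode [simp]: "Y vac n v = (if n = -1 then v else 0)"
  using vertex_algebra unfolding vertex_algebra_def by auto

lemma mode_minus_one_vacuum [simp]: "Y u (-1) vac = u"
  using vertex_algebra unfolding vertex_algebra_def by auto

lemma mode_nonneg_vacuum [simp]: "0 \<le> n \<Longrightarrow> Y u n vac = 0"
  using vertex_algebra unfolding vertex_algebra_def by auto

lemma borcherds:
  "fsum (\<lambda>i. sc ((of_int m) gchoose i) (Y (Y u (l + int i) v) (m + n - int i) w))
   = fsum (\<lambda>i. sc ((-1) ^ i * ((of_int l) gchoose i))
       (Y u (m + l - int i) (Y v (n + int i) w)
        - sc ((-1) powi l) (Y v (n + l - int i) (Y u (m + int i) w))))"
  using vertex_algebra unfolding vertex_algebra_def by blast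

lemma fsum_in_subspace: "subspace S \<Longrightarrow> (\<And>i. f i \<in> S) \<Longrightarrow> fsum f \<in> S"
  unfolding fsum_def by (rule subspace_sum) auto

lemma commutator_formula:
  "Y u m (Y v n w) - Y v n (Y u m w)
   = fsum (\<lambda>i. sc (of_int m gchoose i) (Y (Y u (int i) v) (m + n - int i) w))"
proof -
  have "fsum (\<lambda>i. sc ((-1) ^ i * ((of_int 0) gchoose i))
          (Y u (m + 0 - int i) (Y v (n + int i) w)
           - sc ((-1) powi 0) (Y v (n + 0 - int i) (Y u (m + int i) w))))
        = Y u m (Y v n w) - Y v n (Y u m w)"
    by (subst fsum_singleton[where k=0]) (auto simp: gbinomial_0_left)
  with borcherds[of m u 0 v n w] show ?thesis
    by simp
qed

lemma zero_mode_commutator: "Y u 0 (Y v n w) - Y v n (Y u 0 w) = Y (Y u 0 v) n w"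
  unfolding commutator_formula by (subst fsum_singleton[where k=0]) (auto simp: gbinomial_0_left)

text \<open>Since \<open>u\<^sub>-\<^sub>2 \<one> = D u\<close>, this is the translation property \<open>(D u)\<^sub>n = -n u\<^sub>n\<^sub>-\<^sub>1\<close>.\<close>
lemma translation_mode:
  assumes "1 \<le> k"
  shows "Y (Y u (-2) vac) (- int k) w = sc (of_nat k) (Y u (- 1 - int k) w)"
proof -
  have lhs: "fsum (\<lambda>i. sc ((of_int 0) gchoose i) (Y (Y u (-2 + int i) vac) (0 + - int k - int i) w))
      = Y (Y u (-2) vac) (- int k) w"
    by (subst fsum_singleton[where k=0]) (auto simp: gbinomial_0_left)
  have coeff: "((-1::complex) ^ (k - 1) * ((of_int (-2)) gchoose (k - 1))) = of_nat k"
    using assms by (simp add: gbinomial_minus_two flip: power_mult_distrib)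
  have "- int k + int (k - 1) = -1" "0 + -2 - int (k - 1) = - 1 - int k"
    using assms by auto
  then have rhs: "fsum (\<lambda>i. sc ((-1) ^ i * ((of_int (-2)) gchoose i))
      (Y u (0 + -2 - int i) (Y vac (- int k + int i) w)
       - sc ((-1) powi (-2)) (Y vac (- int k + -2 - int i) (Y u (0 + int i) w))))
      = sc (of_nat k) (Y u (- 1 - int k) w)"
    using assms coeff by (subst fsum_singleton[where k="k - 1"]) auto
  show ?thesis
    using borcherds[of 0 u "-2" vac "- int k" w] lhs rhs by simp
qed

abbreviation C :: "'v set" where "C \<equiv> C2 sc Y"

lemma subspace_C2: "subspace C"
  unfolding C2_def by simp

lemma mode_minus_two_in_C2: "Y u (-2) w \<in> C"
  unfolding C2_def by (rule span_base) blast

lemma mode_le_minus_two_in_C2: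
  assumes "n \<le> -2"
  shows "Y u n w \<in> C"
proof -
  have "Y u (- int k - 2) w \<in> C" for k
  proof (induction k arbitrary: u)
    case 0
    show ?case
      using mode_minus_two_in_C2 by simp
  next
    case (Suc k)
    have "sc (of_nat (k + 2)) (Y u (- 1 - int (k + 2)) w) \<in> C"
      using Suc.IH[of "Y u (-2) vac"] translation_mode[of "k + 2" u w] by (simp add: algebra_simps)
    then have "sc (inverse (of_nat (k + 2))) (sc (of_nat (k + 2)) (Y u (- 1 - int (k + 2)) w)) \<in> C"
      by (rule subspace_scale[OF subspace_C2])
    moreover have "inverse (of_nat (k + 2)) * of_nat (k + 2) = (1::complex)"
      by (rule left_inverse) (simp only: of_nat_eq_0_iff; simp)
    ultimately have "Y u (- 1 - int (k + 2)) w \<in> C"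
      by (simp only: scale_scale scale_one)
    then show ?case
      by (simp add: algebra_simps)
  qed
  from this[of "nat (- n - 2)"] assms show ?thesis
    by simp
qed

text \<open>Borcherds' identity with \<open>m = -1\<close>, \<open>n = 0\<close>, \<open>w = \<one>\<close> is skew symmetry; its correction
  terms \<open>(u\<^sub>l\<^sub>+\<^sub>i v)\<^sub>-\<^sub>1\<^sub>-\<^sub>i \<one>\<close> with \<open>i \<ge> 1\<close> lie in \<open>C\<^sub>2(V)\<close>.\<close>
lemma skew_symmetry_mod_C2: "Y u l v + sc ((-1) powi l) (Y v l u) \<in> C"
proof -
  define f where "f i = sc (of_int (-1) gchoose i) (Y (Y u (l + int i) v) (-1 + 0 - int i) vac)" for i
  obtain N where N: "\<forall>n\<ge>N. Y u n v = 0"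
    using truncation by blast
  have "fsum f = sum f {..<Suc (nat (N - l))}"
    by (rule fsum_eq_sum) (auto simp: f_def N)
  also have "\<dots> = Y u l v + (\<Sum>i<nat (N - l). f (Suc i))"
    by (subst sum.lessThan_Suc_shift) (simp add: f_def)
  finally have lhs: "fsum f = Y u l v + (\<Sum>i<nat (N - l). f (Suc i))" .
  have rhs: "fsum (\<lambda>i. sc ((-1) ^ i * ((of_int l) gchoose i))
      (Y u (-1 + l - int i) (Y v (0 + int i) vac)
       - sc ((-1) powi l) (Y v (0 + l - int i) (Y u (-1 + int i) vac))))
      = - sc ((-1) powi l) (Y v l u)"
    by (subst fsum_singleton[where k=0]) (auto simp: scale_minus_right)
  have corrections: "(\<Sum>i<nat (N - l). f (Suc i)) \<in> C"
    by (rule subspace_sum[OF subspace_C2])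
      (auto simp: f_def intro!: subspace_scale[OF subspace_C2] mode_le_minus_two_in_C2)
  have "Y u l v + sc ((-1) powi l) (Y v l u) = - (\<Sum>i<nat (N - l). f (Suc i))"
    using borcherds[of "-1" u l v 0 vac] lhs rhs unfolding f_def
    by (simp add: algebra_simps eq_neg_iff_add_eq_0)
  then show ?thesis
    using subspace_neg[OF subspace_C2 corrections] by simp
qed

lemma skew_minus_one: "Y u (-1) v - Y v (-1) u \<in> C"
  using skew_symmetry_mod_C2[of u "-1" v] by (simp add: scale_minus_left)

lemma commutator_negative_modes_in_C2:
  assumes "m \<le> -1" and "n \<le> -1"
  shows "Y u m (Y v n w) - Y v n (Y u m w) \<in> C"
  unfolding commutator_formula using assms
  by (intro fsum_in_subspace[OF subspace_C2] subspace_scale[OF subspace_C2] mode_le_minus_two_in_C2)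
    simp

lemma nonpos_mode_maps_C2:
  assumes "s \<le> 0" and "x \<in> C"
  shows "Y a s x \<in> C"
proof -
  have "Y a s (Y u (-2) v) \<in> C" for u v
  proof (cases "s = 0")
    case True
    have "Y a 0 (Y u (-2) v) = Y (Y a 0 u) (-2) v + Y u (-2) (Y a 0 v)"
      using zero_mode_commutator[of a u "-2" v] by (simp add: algebra_simps)
    then show ?thesis
      using True subspace_add[OF subspace_C2 mode_minus_two_in_C2 mode_minus_two_in_C2] by simp
  next
    case False
    then have "Y a s (Y u (-2) v) - Y u (-2) (Y a s v) \<in> C"
      using assms by (intro commutator_negative_modes_in_C2) auto
    from subspace_add[OF subspace_C2 this mode_minus_two_in_C2[of u "Y a s v"]] show ?thesis
      by simp
  qed
  then have "C \<subseteq> {x. Y a s x \<in> C}"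
    unfolding C2_def
    by (intro span_minimal module_hom.subspace_linear_preimage[OF mode_hom])
      (auto simp flip: C2_def intro: subspace_C2)
  with assms show ?thesis
    by auto
qed

lemma nonpos_mode_of_C2:
  assumes "s \<le> 0" and "x \<in> C"
  shows "Y x s w \<in> C"
proof -
  have "sc ((-1) powi s) (Y w s x) \<in> C"
    using assms by (intro subspace_scale[OF subspace_C2] nonpos_mode_maps_C2)
  from subspace_diff[OF subspace_C2 skew_symmetry_mod_C2[of x s w] this] show ?thesis
    by simp
qed

lemma self_zero_mode_in_C2: "Y v 0 v \<in> C"
proof -
  have "sc (1/2) (Y v 0 v + Y v 0 v) \<in> C"
    using skew_symmetry_mod_C2[of v 0 v] by (intro subspace_scale[OF subspace_C2]) simp
  moreover have "sc (1/2) (Y v 0 v + Y v 0 v) = Y v 0 v"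
    by (simp add: scale_right_distrib flip: scale_left_distrib)
  ultimately show ?thesis
    by simp
qed

text \<open>\<open>npow v k = v\<^sub>-\<^sub>1\<^sup>k v\<close> represents the power \<open>v\<^sup>k\<^sup>+\<^sup>1\<close> in \<open>V/C\<^sub>2(V)\<close>.\<close>
definition npow :: "'v \<Rightarrow> nat \<Rightarrow> 'v" where
  "npow v k = (Y v (-1) ^^ k) v"

lemma npow_0 [simp]: "npow v 0 = v"
  by (simp add: npow_def)

lemma npow_Suc [simp]: "npow v (Suc k) = Y v (-1) (npow v k)"
  by (simp add: npow_def)

lemma iter_replicate_minus_one: "iter Y v (replicate k (-1)) = npow v k"
  by (induction k) simp_all

lemma zero_mode_npow_mod_C2:
  "Y b 0 (npow v (Suc t)) - sc (of_nat (t + 2)) (Y (Y b 0 v) (-1) (npow v t)) \<in> C"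
proof (induction t)
  case 0
  have "Y b 0 (Y v (-1) v) = Y (Y b 0 v) (-1) v + Y v (-1) (Y b 0 v)"
    using zero_mode_commutator[of b v "-1" v] by (simp add: algebra_simps)
  moreover have "sc 2 x = x + x" for x
    using scale_left_distrib[of 1 1 x] by simp
  ultimately show ?case
    using subspace_neg[OF subspace_C2 skew_minus_one[of "Y b 0 v" v]] by simp
next
  case (Suc t)
  define c :: complex where "c = of_nat (t + 2)"
  let ?x = "Y b 0 v" and ?p = "npow v t"
  have "of_nat (Suc t + 2) = c + 1"
    unfolding c_def by simp
  then have "Y b 0 (npow v (Suc (Suc t))) - sc (of_nat (Suc t + 2)) (Y ?x (-1) (npow v (Suc t)))
      = Y v (-1) (Y b 0 (npow v (Suc t)) - sc c (Y ?x (-1) ?p))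
        + sc c (Y v (-1) (Y ?x (-1) ?p) - Y ?x (-1) (Y v (-1) ?p))"
    using zero_mode_commutator[of b v "-1" "npow v (Suc t)"]
    by (simp add: mode_diff mode_scale scale_right_diff_distrib scale_left_distrib algebra_simps)
  moreover have "Y v (-1) (Y b 0 (npow v (Suc t)) - sc c (Y ?x (-1) ?p)) \<in> C"
    using Suc.IH unfolding c_def by (intro nonpos_mode_maps_C2) simp_all
  moreover have "sc c (Y v (-1) (Y ?x (-1) ?p) - Y ?x (-1) (Y v (-1) ?p)) \<in> C"
    by (intro subspace_scale[OF subspace_C2] commutator_negative_modes_in_C2) simp_all
  ultimately show ?case
    by (metis subspace_add[OF subspace_C2])
qed

lemma self_zero_mode_npow_in_C2: "Y v 0 (npow v k) \<in> C"
proof (cases k)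
  case 0
  then show ?thesis
    using self_zero_mode_in_C2 by simp
next
  case (Suc t)
  have "sc (of_nat (t + 2)) (Y (Y v 0 v) (-1) (npow v t)) \<in> C"
    by (intro subspace_scale[OF subspace_C2] nonpos_mode_of_C2[OF _ self_zero_mode_in_C2]) simp
  from subspace_add[OF subspace_C2 zero_mode_npow_mod_C2[of v v t] this] Suc show ?thesis
    by simp
qed

lemma iter_in_C2_or_npow:
  "set ns \<subseteq> {0, -1} \<Longrightarrow> iter Y v ns \<in> C \<or> iter Y v ns = npow v (length ns)"
proof (induction ns)
  case Nil
  then show ?case by simp
next
  case (Cons n ns)
  then have n: "n \<in> {0, -1}"
    by simp
  consider "iter Y v ns \<in> C" | "iter Y v ns = npow v (length ns)"
    using Cons by auto
  then show ?case
  proof cases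
    case 1
    then show ?thesis
      using n nonpos_mode_maps_C2 by auto
  next
    case 2
    then show ?thesis
      using n self_zero_mode_npow_in_C2 by auto
  qed
qed

lemma lsr01_subset_r01: "lsr01 Y M \<subseteq> r01 Y M"
proof
  fix v assume "v \<in> lsr01 Y M"
  then obtain m where "\<forall>s ns. s \<in> {0, -1} \<and> length ns \<ge> m \<and> set ns \<subseteq> {0, -1}
      \<longrightarrow> Y vac s (iter Y v ns) \<in> M"
    unfolding lsr01_def by blast
  then have "\<forall>ns. length ns \<ge> m \<and> set ns \<subseteq> {0, -1} \<longrightarrow> iter Y v ns \<in> M"
    by (metis insert_iff vacuum_mode)
  then show "v \<in> r01 Y M"
    unfolding r01_def by blast
qed

end

locale C2_ideal = vertex_alg +
  fixes M
  assumes subspace_M: "module.subspace sc M"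
    and C2_subset: "C2 sc Y \<subseteq> M"
    and quotient_ideal: "quotient_ideal sc Y M"
begin

lemma minus_one_mode_mem: "x \<in> M \<Longrightarrow> Y a (-1) x \<in> M"
  using quotient_ideal unfolding quotient_ideal_def by blast

lemma mem_mod_C2: "a - b \<in> C \<Longrightarrow> b \<in> M \<Longrightarrow> a \<in> M"
  using subspace_add[OF subspace_M, of "a - b" b] C2_subset by auto

context
  fixes v m
  assumes npow_mem: "\<And>k. m \<le> k \<Longrightarrow> npow v k \<in> M"
begin

lemma mode_npow_mem:
  assumes "m < t" and "s \<in> {0, -1}"
  shows "Y b s (npow v t) \<in> M"
proof (cases "s = 0")
  case True
  obtain t' where t: "t = Suc t'" and "m \<le> t'"
    using assms(1) by (cases t) auto
  then have "sc (of_nat (t' + 2)) (Y (Y b 0 v) (-1) (npow v t')) \<in> M"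
    by (intro subspace_scale[OF subspace_M] minus_one_mode_mem npow_mem)
  with zero_mode_npow_mod_C2[of b v t'] show ?thesis
    unfolding True t by (rule mem_mod_C2)
next
  case False
  with assms have "s = -1" and "m \<le> t"
    by auto
  then show ?thesis
    by (simp add: minus_one_mode_mem npow_mem)
qed

lemma npow_mode_mem:
  assumes "m < t" and "n \<in> {0, -1}"
  shows "Y (npow v t) n w \<in> M"
proof -
  have "Y (npow v t) n w - (- sc ((-1) powi n) (Y w n (npow v t))) \<in> C"
    using skew_symmetry_mod_C2[of "npow v t" n w] by simp
  moreover have "- sc ((-1) powi n) (Y w n (npow v t)) \<in> M"
    using assms by (intro subspace_neg[OF subspace_M] subspace_scale[OF subspace_M] mode_npow_mem)
  ultimately show ?thesis
    by (rule mem_mod_C2)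
qed

lemma mode_iter_mem:
  assumes "m < length ns" and "set ns \<subseteq> {0, -1}" and "s \<in> {0, -1}"
  shows "Y b s (iter Y v ns) \<in> M"
proof -
  consider "iter Y v ns \<in> C" | "iter Y v ns = npow v (length ns)"
    using iter_in_C2_or_npow[OF assms(2)] by blast
  then show ?thesis
  proof cases
    case 1
    with assms(3) have "Y b s (iter Y v ns) \<in> C"
      by (intro nonpos_mode_maps_C2) auto
    with C2_subset show ?thesis
      by blast
  next
    case 2
    with assms show ?thesis
      by (simp add: mode_npow_mem)
  qed
qed

lemma iter_mode_mem:
  assumes "m < length ns" and "set ns \<subseteq> {0, -1}" and "n \<in> {0, -1}"
  shows "Y (iter Y v ns) n w \<in> M"
proof -
  consider "iter Y v ns \<in> C" | "iter Y v ns = npow v (length ns)"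
    using iter_in_C2_or_npow[OF assms(2)] by blast
  then show ?thesis
  proof cases
    case 1
    with assms(3) have "Y (iter Y v ns) n w \<in> C"
      by (intro nonpos_mode_of_C2) auto
    with C2_subset show ?thesis
      by blast
  next
    case 2
    with assms show ?thesis
      by (simp add: npow_mode_mem)
  qed
qed

end

lemma npow_mem_of_r01:
  assumes "v \<in> r01 Y M"
  shows "\<exists>m. \<forall>k\<ge>m. npow v k \<in> M"
proof -
  from assms obtain m where m: "\<forall>ns. m \<le> length ns \<and> set ns \<subseteq> {0, -1} \<longrightarrow> iter Y v ns \<in> M"
    unfolding r01_def by blast
  have "npow v k \<in> M" if "m \<le> k" for k
    using m[rule_format, of "replicate k (-1)"] that
    by (simp add: iter_replicate_minus_one set_replicate_conv_if)
  then show ?thesis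
    by blast
qed

lemma r01_subset_sr01: "r01 Y M \<subseteq> sr01 Y M"
proof
  fix v assume "v \<in> r01 Y M"
  then obtain m where npow: "\<And>k. m \<le> k \<Longrightarrow> npow v k \<in> M"
    using npow_mem_of_r01 by blast
  have "v \<in> lsr01 Y M"
    unfolding lsr01_def using mode_iter_mem[OF npow] by (auto intro!: exI[of _ "Suc m"])
  moreover have "v \<in> rsr01 Y M"
    unfolding rsr01_def using iter_mode_mem[OF npow] by (auto intro!: exI[of _ "Suc m"])
  ultimately show "v \<in> sr01 Y M"
    unfolding sr01_def by blast
qed

lemma MZ01_subspace: "MZ01_subspace Y M"
  using r01_subset_sr01 lsr01_subset_r01 unfolding MZ01_subspace_def sr01_def by blast

end

theorem mainTheorem9:
  fixes sc :: "complex \<Rightarrow> 'v::ab_group_add \<Rightarrow> 'v"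
    and Y :: "'v \<Rightarrow> int \<Rightarrow> 'v \<Rightarrow> 'v"
    and vac :: 'v
    and M :: "'v set"
  assumes "vertex_algebra sc Y vac"
    and "module.subspace sc M"
    and "C2 sc Y \<subseteq> M"
    and "quotient_ideal sc Y M"
  shows "MZ01_subspace Y M"
proof -
  interpret C2_ideal sc Y vac M
    by (unfold_locales; fact assms)+
  show ?thesis
    by (rule MZ01_subspace)
qed

end
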